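(* For every $m\ge0$ and $n\ge1$ there is a bijection between $Q_3(m,n)$ and $P_3(-m,n)$.
   Context: Partitions: $\lambda_1\ge\cdots\ge\lambda_\ell>0$, $\ell(\lambda)=\ell$, $\lambda_i=0$ for $i>\ell$, $s(\lambda)$ the smallest part with $s(\emptyset)=+\infty$. Rank $=\lambda_1-\ell$; rank-set $=[-\lambda_1,1-\lambda_2,\dots,\ell-1-\lambda_\ell,\ell,\ell+1,\dots]$. $Q(m,n)$: partitions of $n$ whose rank-set contains $m$; $P(-m,n)$: partitions of $n$ with rank $\ge-m$. $m$-Durfee rectangle symbol $(\alpha,\beta)_{(m+j)\times j}$ of $\lambda$: $j\ge0$ is the largest integer with $\lambda_{m+j}\ge j$; $\alpha$ is the conjugate of $(\lambda_1-j,\dots,\lambda_{m+j}-j)$ and $\beta=(\lambda_{m+j+1},\lambda_{m+j+2},\dots)$; $|\lambda|=|\alpha|+|\beta|+j(m+j)$. $Q_3(m,n)$ is the set of $\lambda\in Q(m,n)$ whose symbol has $j\ge1$, $\ell(\beta)-\ell(\alpha)\ge1$, $\alpha_1=m+j$ and $s(\beta)=1$. $P_3(-m,n)$ is the set of $\mu\in P(-m,n)$ whose symbol $(\gamma,\delta)_{(m+j')\times j'}$ has $j'\ge2$ and $\delta_1\le j'-2$. *)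

theory Defs
  imports Main "HOL-Library.Extended_Nat"
begin

definition is_partition :: "nat list \<Rightarrow> bool" where
  "is_partition xs \<longleftrightarrow> sorted_wrt (\<ge>) xs \<and> (\<forall>x\<in>set xs. 0 < x)"

definition partitions :: "nat \<Rightarrow> nat list set" where
  "partitions n = {xs. is_partition xs \<and> sum_list xs = n}"

text \<open>1-indexed parts, with lambda_i = 0 for i > l.\<close>
definition part :: "nat list \<Rightarrow> nat \<Rightarrow> nat" where
  "part xs i = (if 1 \<le> i \<and> i \<le> length xs then xs ! (i - 1) else 0)"

definition smallest_part :: "nat list \<Rightarrow> enat" where
  "smallest_part xs = (if xs = [] then \<infinity> else enat (Min (set xs)))"

definition rank :: "nat list \<Rightarrow> int" where
  "rank xs = int (part xs 1) - int (length xs)"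

definition rank_set :: "nat list \<Rightarrow> int set" where
  "rank_set xs = {int (i - 1) - int (part xs i) | i. 1 \<le> i \<and> i \<le> length xs}
                 \<union> {int k | k. length xs \<le> k}"

definition Q :: "nat \<Rightarrow> nat \<Rightarrow> nat list set" where
  "Q m n = {xs \<in> partitions n. int m \<in> rank_set xs}"

definition P_neg :: "nat \<Rightarrow> nat \<Rightarrow> nat list set" where
  "P_neg m n = {xs \<in> partitions n. rank xs \<ge> - int m}"

definition conjugate :: "nat list \<Rightarrow> nat list" where
  "conjugate xs = map (\<lambda>k. length (filter (\<lambda>x. k \<le> x) xs))
                      [1..<Suc (if xs = [] then 0 else Max (set xs))]"

definition durfee_j :: "nat \<Rightarrow> nat list \<Rightarrow> nat" where
  "durfee_j m xs = (GREATEST j. j \<le> part xs (m + j))"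

definition durfee_alpha :: "nat \<Rightarrow> nat list \<Rightarrow> nat list" where
  "durfee_alpha m xs = (let j = durfee_j m xs in
     conjugate (map (\<lambda>i. part xs i - j) [1..<Suc (m + j)]))"

definition durfee_beta :: "nat \<Rightarrow> nat list \<Rightarrow> nat list" where
  "durfee_beta m xs = drop (m + durfee_j m xs) xs"

definition Q3 :: "nat \<Rightarrow> nat \<Rightarrow> nat list set" where
  "Q3 m n = {xs \<in> Q m n.
     (let j = durfee_j m xs; a = durfee_alpha m xs; b = durfee_beta m xs in
       1 \<le> j \<and> int (length b) - int (length a) \<ge> 1 \<and> part a 1 = m + j
       \<and> smallest_part b = 1)}"

definition P3 :: "nat \<Rightarrow> nat \<Rightarrow> nat list set" where
  "P3 m n = {xs \<in> P_neg m n.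
     (let j = durfee_j m xs; d = durfee_beta m xs in
       2 \<le> j \<and> int (part d 1) \<le> int j - 2)}"

end

theory Submission
  imports Defs
begin

text \<open>Write \<open>\<lambda> \<in> Q\<^sub>3(m,n)\<close> as \<open>A @ j # B\<close> with \<open>A\<close> its first \<open>m + j\<close> parts.
  The condition \<open>\<alpha>\<^sub>1 = m + j\<close> says that every part of \<open>A\<close> exceeds \<open>j\<close>, and then
  \<open>m \<in>\<close> rank-set forces \<open>\<lambda>\<^sub>m\<^sub>+\<^sub>j\<^sub>+\<^sub>1 = j\<close>; moreover \<open>\<ell>(\<beta>) > \<ell>(\<alpha>)\<close> reads \<open>\<lambda>\<^sub>1 \<le> j + \<ell>(B)\<close>
  and \<open>s(\<beta>) = 1\<close> says that \<open>B\<close> ends in a part \<open>1\<close>.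
  The bijection removes the first column of \<open>B\<close> together with the part \<open>j\<close> and
  reinserts these \<open>j + \<ell>(B)\<close> cells as a new largest part:
  \<open>A @ j # B \<mapsto> (j + \<ell>(B)) # A @ B'\<close>, where \<open>B'\<close> is \<open>B\<close> with its first column removed.
  The image has an \<open>m\<close>-Durfee rectangle of width \<open>j + 1\<close>, the parts of \<open>B'\<close> are at
  most \<open>(j + 1) - 2\<close>, and since \<open>B\<close> contains a part \<open>1\<close> we have \<open>\<ell>(B') < \<ell>(B)\<close>,
  which is exactly the rank condition \<open>\<ge> -m\<close>. The inverse deletes the largest part \<open>c\<close>
  of a partition with Durfee width \<open>j\<close>, puts a part \<open>j - 1\<close> below the remaining rows and
  adds a column of height \<open>c - (j - 1)\<close> beneath it.\<close>

lemma part_Cons_1 [simp]: "part (x # xs) 1 = x" "part (x # xs) (Suc 0) = x"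
  by (simp_all add: part_def)

lemma part_append_left: "1 \<le> i \<Longrightarrow> i \<le> length A \<Longrightarrow> part (A @ R) i = A ! (i - 1)"
  by (auto simp: part_def nth_append)

lemma part_append_length: "A \<noteq> [] \<Longrightarrow> part (A @ R) (length A) = last A"
  by (cases A) (auto simp: part_def nth_append last_conv_nth)

lemma part_append_Suc_length: "part (A @ R) (Suc (length A)) = part R 1"
  by (cases R) (auto simp: part_def nth_append)

lemma part_le_sum_list: "part xs i \<le> sum_list xs"
  by (auto simp: part_def intro!: member_le_sum_list)

lemma part_antimono:
  assumes "is_partition xs" "1 \<le> i" "i \<le> k"
  shows "part xs k \<le> part xs i"
proof (cases "i < k \<and> k \<le> length xs")
  case True
  then have "xs ! (k - 1) \<le> xs ! (i - 1)"
    using assms by (auto simp: is_partition_def sorted_wrt_iff_nth_less)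
  then show ?thesis using True assms(2) by (simp add: part_def)
qed (use assms(3) in \<open>auto simp: part_def\<close>)

lemma sorted_wrt_ge_hd: "sorted_wrt (\<ge>) (xs :: nat list) \<Longrightarrow> x \<in> set xs \<Longrightarrow> x \<le> hd xs"
  by (cases xs) auto

lemma sorted_wrt_ge_last: "sorted_wrt (\<ge>) (xs :: nat list) \<Longrightarrow> x \<in> set xs \<Longrightarrow> last xs \<le> x"
proof (induction xs)
  case (Cons a xs)
  then show ?case by (cases "xs = []") (auto dest: last_in_set)
qed simp

lemma smallest_part_sorted:
  assumes "sorted_wrt (\<ge>) xs" "xs \<noteq> []"
  shows "smallest_part xs = enat (last xs)"
proof -
  have "Min (set xs) = last xs"
    using assms by (intro Min_eqI) (auto intro: sorted_wrt_ge_last)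
  then show ?thesis using assms(2) by (simp add: smallest_part_def)
qed

subsection \<open>The Durfee rectangle of a decomposed partition\<close>

lemma durfee_j_le_part: "durfee_j m xs \<le> part xs (m + durfee_j m xs)"
  unfolding durfee_j_def
  by (rule GreatestI_nat[of _ 0 "sum_list xs"]) (auto intro: order_trans part_le_sum_list)

lemma part_after_durfee_j: "part xs (m + durfee_j m xs + 1) \<le> durfee_j m xs"
proof (rule ccontr)
  assume "\<not> ?thesis"
  then have "durfee_j m xs + 1 \<le> part xs (m + (durfee_j m xs + 1))" by simp
  then have "durfee_j m xs + 1 \<le> durfee_j m xs"
    unfolding durfee_j_def
    by (rule Greatest_le_nat[of _ _ "sum_list xs"]) (auto intro: order_trans part_le_sum_list)
  then show False by simp
qed

lemma durfee_j_eqI: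
  assumes "is_partition xs" "j \<le> part xs (m + j)" "part xs (m + j + 1) \<le> j"
  shows "durfee_j m xs = j"
  unfolding durfee_j_def
proof (rule Greatest_equality)
  fix y assume y: "y \<le> part xs (m + y)"
  show "y \<le> j"
  proof (rule ccontr)
    assume "\<not> y \<le> j"
    then have "part xs (m + y) \<le> part xs (m + j + 1)" by (intro part_antimono assms(1)) auto
    then show False using y assms(3) \<open>\<not> y \<le> j\<close> by linarith
  qed
qed (rule assms(2))

lemma durfee_j_append:
  assumes "is_partition (A @ R)" "length A = m + j" "A \<noteq> []" "j \<le> last A" "part R 1 \<le> j"
  shows "durfee_j m (A @ R) = j"
  using assms part_append_length[of A R] part_append_Suc_length[of A R]
  by (intro durfee_j_eqI) auto

lemma durfee_beta_append:
  "durfee_j m (A @ R) = j \<Longrightarrow> length A = m + j \<Longrightarrow> durfee_beta m (A @ R) = R"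
  by (simp add: durfee_beta_def)

lemma durfee_alpha_append:
  assumes "durfee_j m (A @ R) = j" "length A = m + j"
  shows "durfee_alpha m (A @ R) = conjugate (map (\<lambda>a. a - j) A)"
proof -
  have "map (\<lambda>i. part (A @ R) i - j) [1..<Suc (m + j)] = map (\<lambda>a. a - j) A"
    using assms(2) by (intro nth_equalityI) (auto simp: part_def nth_append simp del: upt_Suc)
  then show ?thesis using assms(1) by (simp add: durfee_alpha_def)
qed

lemma length_conjugate_diff:
  assumes "sorted_wrt (\<ge>) A" "A \<noteq> []"
  shows "length (conjugate (map (\<lambda>a. a - j) A)) = hd A - j"
proof -
  have "Max (set (map (\<lambda>a. a - j) A)) = hd A - j"
    using assms by (intro Max_eqI) (auto dest: sorted_wrt_ge_hd)
  then show ?thesis using assms(2) by (simp add: conjugate_def) arith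
qed

lemma part_conjugate_1: "part (conjugate ys) 1 = length (filter (\<lambda>y. 1 \<le> y) ys)"
proof (cases "ys \<noteq> [] \<and> Max (set ys) \<noteq> 0")
  case False
  then have "conjugate ys = []" by (auto simp: conjugate_def)
  moreover have "\<forall>y\<in>set ys. y = 0"
    using False Max_ge[of "set ys"] by (cases "ys = []") auto
  ultimately show ?thesis by (auto simp: part_def intro!: filter_False)
qed (auto simp: part_def conjugate_def simp del: upt_Suc)

lemma part_conjugate_diff_1:
  "part (conjugate (map (\<lambda>a. a - j) A)) 1 = length (filter (\<lambda>a. j < a) A)"
proof -
  have "(\<lambda>y. 1 \<le> y) \<circ> (\<lambda>a. a - j) = (\<lambda>a. j < a)" by auto
  then show ?thesis by (simp only: part_conjugate_1 length_filter_map)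
qed

lemma rank_set_after_rectangle_iff:
  assumes "is_partition (A @ x # B)" "length A = m + j" "\<forall>a\<in>set A. j < a" "x \<le> j"
  shows "int m \<in> rank_set (A @ x # B) \<longleftrightarrow> x = j"
proof
  assume "x = j"
  then show "int m \<in> rank_set (A @ x # B)"
    unfolding rank_set_def
    using assms(2) part_append_Suc_length[of A "x # B"]
    by (intro UnI1 CollectI exI[of _ "Suc (length A)"]) simp
next
  let ?xs = "A @ x # B"
  assume "int m \<in> rank_set ?xs"
  then obtain i where i: "1 \<le> i" "i \<le> length ?xs" "int (i - 1) - int (part ?xs i) = int m"
    using assms(2) unfolding rank_set_def by auto
  show "x = j"
  proof (cases "i \<le> m + j")
    case True
    then have "part ?xs i \<in> set A"
      using i assms(2) part_append_left[of i A "x # B"] by simp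
    then show ?thesis using assms(3) i True by fastforce
  next
    case False
    then have "part ?xs i \<le> part ?xs (Suc (length A))"
      using assms(2) by (intro part_antimono assms(1)) auto
    then show ?thesis using i False assms(2,4) part_append_Suc_length[of A "x # B"] by simp
  qed
qed

subsection \<open>Removing the first column\<close>

definition remove_first_column :: "nat list \<Rightarrow> nat list" where
  "remove_first_column B = filter (\<lambda>x. 0 < x) (map (\<lambda>x. x - 1) B)"

lemma sum_list_remove_first_column:
  "\<forall>x\<in>set B. 0 < x \<Longrightarrow> sum_list (remove_first_column B) + length B = sum_list B"
  by (induction B) (auto simp: remove_first_column_def)

lemma length_remove_first_column_less:
  assumes "1 \<in> set B"
  shows "length (remove_first_column B) < length B"
proof -
  have "0 \<in> set (map (\<lambda>x. x - 1) B)" using assms by force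
  then show ?thesis
    unfolding remove_first_column_def using length_filter_less[of 0 _ "\<lambda>x. 0 < x"] by fastforce
qed

lemma set_remove_first_column: "d \<in> set (remove_first_column B) \<Longrightarrow> 0 < d \<and> Suc d \<in> set B"
  by (auto simp: remove_first_column_def)

lemma sorted_remove_first_column:
  "sorted_wrt (\<ge>) B \<Longrightarrow> sorted_wrt (\<ge>) (remove_first_column B)"
  unfolding remove_first_column_def
  by (rule sorted_wrt_filter) (auto simp: sorted_wrt_map elim: sorted_wrt_mono_rel[rotated])

lemma remove_first_column_simps [simp]:
  "remove_first_column [] = []"
  "remove_first_column (x # xs) = (if x \<le> 1 then remove_first_column xs else (x - 1) # remove_first_column xs)"
  by (simp_all add: remove_first_column_def)

lemma remove_first_column_append [simp]:
  "remove_first_column (xs @ ys) = remove_first_column xs @ remove_first_column ys"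
  by (simp add: remove_first_column_def)

lemma remove_first_column_map_Suc [simp]:
  "\<forall>d\<in>set D. 0 < d \<Longrightarrow> remove_first_column (map Suc D) = D"
  by (simp add: remove_first_column_def comp_def)

lemma remove_first_column_replicate [simp]:
  "x \<le> 1 \<Longrightarrow> remove_first_column (replicate k x) = []"
  by (induction k) simp_all

lemma add_column_remove_first_column:
  assumes "is_partition B"
  shows "map Suc (remove_first_column B) @ replicate (length B - length (remove_first_column B)) 1 = B"
  using assms
proof (induction B)
  case (Cons b B)
  then have IH: "map Suc (remove_first_column B) @ replicate (length B - length (remove_first_column B)) 1 = B"
    and "0 < b" and b_max: "\<forall>x\<in>set B. x \<le> b"
    by (auto simp: is_partition_def)
  show ?case
  proof (cases "b = 1")
    case True
    then have "\<forall>x\<in>set B. x = 1" using Cons.prems b_max by (fastforce simp: is_partition_def)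
    then show ?thesis using True
      by (simp add: remove_first_column_def filter_False replicate_length_same)
  next
    case False
    then show ?thesis using IH \<open>0 < b\<close> by (simp add: remove_first_column_def)
  qed
qed (simp add: remove_first_column_def)

subsection \<open>The two families in explicit form\<close>

text \<open>\<open>A @ j # B\<close>: the rectangle rows \<open>A\<close>, the part \<open>j\<close> just below it and the rest
  \<open>B\<close>, so that \<open>\<beta> = j # B\<close>.\<close>

definition Q3_shape :: "nat \<Rightarrow> nat \<Rightarrow> nat list \<Rightarrow> nat \<Rightarrow> nat list \<Rightarrow> bool" where
  "Q3_shape m n A j B \<longleftrightarrow> is_partition (A @ j # B) \<and> sum_list (A @ j # B) = n
     \<and> length A = m + j \<and> 1 \<le> j \<and> (\<forall>a\<in>set A. j < a) \<and> B \<noteq> [] \<and> last B = 1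
     \<and> hd A \<le> j + length B"

text \<open>\<open>c # C @ D\<close>: the rectangle rows \<open>c # C\<close> and \<open>\<delta> = D\<close>.\<close>

definition P3_shape :: "nat \<Rightarrow> nat \<Rightarrow> nat \<Rightarrow> nat list \<Rightarrow> nat \<Rightarrow> nat list \<Rightarrow> bool" where
  "P3_shape m n c C j D \<longleftrightarrow> is_partition (c # C @ D) \<and> sum_list (c # C @ D) = n
     \<and> Suc (length C) = m + j \<and> 2 \<le> j \<and> j \<le> last (c # C) \<and> (\<forall>d\<in>set D. d + 2 \<le> j)
     \<and> length D + j \<le> c"

lemma Q3_shape_durfee_j:
  assumes "Q3_shape m n A j B"
  shows "durfee_j m (A @ j # B) = j"
proof -
  have "A \<noteq> []" using assms by (auto simp: Q3_shape_def)
  then have "last A \<in> set A" by simp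
  then show ?thesis using assms by (intro durfee_j_append) (auto simp: Q3_shape_def)
qed

lemma P3_shape_durfee_j:
  assumes "P3_shape m n c C j D"
  shows "durfee_j m (c # C @ D) = j"
proof -
  have "part D 1 \<le> j" using assms by (cases D) (auto simp: P3_shape_def part_def)
  then show ?thesis
    using assms durfee_j_append[of "c # C" D m j] by (simp add: P3_shape_def)
qed

lemma Q3_shape_in_Q3:
  assumes shape: "Q3_shape m n A j B"
  shows "A @ j # B \<in> Q3 m n"
proof -
  have p: "is_partition (A @ j # B)" and lA: "length A = m + j" and A_gt: "\<forall>a\<in>set A. j < a"
    and "A \<noteq> []" and "B \<noteq> []" and "last B = 1"
    using shape by (auto simp: Q3_shape_def)
  have dj: "durfee_j m (A @ j # B) = j" by (rule Q3_shape_durfee_j[OF shape])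
  have sA: "sorted_wrt (\<ge>) A" and sB: "sorted_wrt (\<ge>) (j # B)"
    using p by (auto simp: is_partition_def sorted_wrt_append)
  have "length (durfee_alpha m (A @ j # B)) = hd A - j"
    "part (durfee_alpha m (A @ j # B)) 1 = m + j"
    using durfee_alpha_append[OF dj lA] length_conjugate_diff[OF sA \<open>A \<noteq> []\<close>]
      part_conjugate_diff_1[of j A] A_gt lA filter_True[where P = "\<lambda>a. j < a" and xs = A] by simp_all
  moreover have "smallest_part (j # B) = 1"
    using smallest_part_sorted[OF sB] \<open>B \<noteq> []\<close> \<open>last B = 1\<close> by (simp add: one_enat_def)
  moreover have "int m \<in> rank_set (A @ j # B)"
    using rank_set_after_rectangle_iff[OF p lA A_gt] by simp
  ultimately show ?thesis using shape dj durfee_beta_append[OF dj lA]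
    by (auto simp: Q3_def Q_def partitions_def Q3_shape_def Let_def)
qed

lemma Q3_shape_of_Q3:
  assumes "xs \<in> Q3 m n"
  obtains A j B where "xs = A @ j # B" "Q3_shape m n A j B"
proof -
  define j where "j = durfee_j m xs"
  have p: "is_partition xs" and s: "sum_list xs = n" and rs: "int m \<in> rank_set xs"
    and j1: "1 \<le> j"
    and lab: "int (length (durfee_beta m xs)) - int (length (durfee_alpha m xs)) \<ge> 1"
    and pa: "part (durfee_alpha m xs) 1 = m + j"
    and sm: "smallest_part (durfee_beta m xs) = 1"
    using assms by (auto simp: Q3_def Q_def partitions_def Let_def j_def)
  have "m + j < length xs"
    using sm by (auto simp: durfee_beta_def smallest_part_def j_def split: if_splits)
  then obtain A x B where xs: "xs = A @ x # B" and lA: "length A = m + j"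
    using id_take_nth_drop[of "m + j" xs] length_take[of "m + j" xs] by fastforce
  have dj: "durfee_j m (A @ x # B) = j" using xs j_def by simp
  have "A \<noteq> []" using lA j1 by auto
  have sA: "sorted_wrt (\<ge>) A" and sB: "sorted_wrt (\<ge>) (x # B)"
    using p xs by (auto simp: is_partition_def sorted_wrt_append)
  have alpha: "durfee_alpha m xs = conjugate (map (\<lambda>a. a - j) A)"
    and beta: "durfee_beta m xs = x # B"
    using durfee_alpha_append[OF dj lA] durfee_beta_append[OF dj lA] xs by simp_all
  have "length (filter (\<lambda>a. j < a) A) = length A"
    using pa lA alpha part_conjugate_diff_1[of j A] by simp
  then have A_gt: "\<forall>a\<in>set A. j < a"
    using length_filter_less[where xs = A and P = "\<lambda>a. j < a"] by (metis less_irrefl)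
  have "x \<le> j"
    using part_after_durfee_j[of xs m] xs lA part_append_Suc_length[of A "x # B"] by (simp add: j_def)
  then have "x = j" using rank_set_after_rectangle_iff[of A x B m j] p xs lA A_gt rs by simp
  have hA: "hd A \<le> j + length B"
    using lab alpha beta length_conjugate_diff[OF sA \<open>A \<noteq> []\<close>] by simp
  have "last (x # B) = 1"
    using sm beta smallest_part_sorted[OF sB] by (simp add: one_enat_def)
  moreover have "B \<noteq> []"
  proof
    assume "B = []"
    then have "hd A \<le> 1" using hA \<open>last (x # B) = 1\<close> \<open>x = j\<close> by simp
    then show False using A_gt \<open>A \<noteq> []\<close> j1 by (metis hd_in_set not_less order_trans)
  qed
  ultimately show ?thesis
    using that xs \<open>x = j\<close> p s lA j1 A_gt hA by (simp add: Q3_shape_def)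
qed

lemma P3_shape_in_P3:
  assumes shape: "P3_shape m n c C j D"
  shows "c # C @ D \<in> P3 m n"
proof -
  have dj: "durfee_j m ((c # C) @ D) = j" using P3_shape_durfee_j[OF shape] by simp
  have lC: "length (c # C) = m + j" using shape by (simp add: P3_shape_def)
  have "int (part D 1) \<le> int j - 2" using shape by (cases D) (auto simp: P3_shape_def part_def)
  moreover have "rank (c # C @ D) \<ge> - int m" using shape by (simp add: P3_shape_def rank_def)
  ultimately show ?thesis using shape dj durfee_beta_append[OF dj lC]
    by (simp add: P3_def P_neg_def partitions_def P3_shape_def Let_def)
qed

lemma P3_shape_of_P3:
  assumes "ys \<in> P3 m n"
  obtains c C j D where "ys = c # C @ D" "P3_shape m n c C j D"
proof -
  define j where "j = durfee_j m ys"
  have p: "is_partition ys" and s: "sum_list ys = n" and rk: "rank ys \<ge> - int m"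
    and j2: "2 \<le> j" and pd: "int (part (drop (m + j) ys) 1) \<le> int j - 2"
    using assms by (auto simp: P3_def P_neg_def partitions_def Let_def j_def durfee_beta_def)
  have rect: "j \<le> part ys (m + j)" using durfee_j_le_part[of m ys] by (simp add: j_def)
  then have len: "m + j \<le> length ys" using j2 by (auto simp: part_def split: if_splits)
  then have "take (m + j) ys \<noteq> []" using j2 by (cases ys) auto
  then obtain c C where take_eq: "take (m + j) ys = c # C" by (cases "take (m + j) ys") auto
  then have lC: "Suc (length C) = m + j" using len length_take[of "m + j" ys] by simp
  define D where "D = drop (m + j) ys"
  have ys: "ys = c # C @ D" using append_take_drop_id[of "m + j" ys] take_eq by (simp add: D_def)
  have sD: "sorted_wrt (\<ge>) D" using p ys by (simp add: is_partition_def sorted_wrt_append)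
  have "\<forall>d\<in>set D. d + 2 \<le> j"
  proof
    fix d assume "d \<in> set D"
    then show "d + 2 \<le> j"
      using pd[folded D_def] sorted_wrt_ge_hd[OF sD, of d] by (cases D) (auto simp: part_def)
  qed
  moreover have "j \<le> last (c # C)" using rect ys lC part_append_length[of "c # C" D] by simp
  moreover have "length D + j \<le> c" using rk ys lC by (simp add: rank_def)
  ultimately show ?thesis using that ys p s lC j2 by (simp add: P3_shape_def)
qed

subsection \<open>The bijection\<close>

definition Q3_to_P3 :: "nat \<Rightarrow> nat list \<Rightarrow> nat list" where
  "Q3_to_P3 m xs = (let j = durfee_j m xs; B = drop (Suc (m + j)) xs in
     (j + length B) # take (m + j) xs @ remove_first_column B)"

definition P3_to_Q3 :: "nat \<Rightarrow> nat list \<Rightarrow> nat list" where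
  "P3_to_Q3 m ys = (let j = durfee_j m ys; D = drop (m + j) ys in
     tl (take (m + j) ys) @ (j - 1) # map Suc D @ replicate (hd ys - j - length D + 1) 1)"

lemma Q3_to_P3_shape:
  "Q3_shape m n A j B \<Longrightarrow> Q3_to_P3 m (A @ j # B) = (j + length B) # A @ remove_first_column B"
  using Q3_shape_durfee_j[of m n A j B] by (simp add: Q3_to_P3_def Q3_shape_def)

lemma P3_to_Q3_shape:
  assumes "P3_shape m n c C j D"
  shows "P3_to_Q3 m (c # C @ D) = C @ (j - 1) # map Suc D @ replicate (c - j - length D + 1) 1"
proof -
  have "length (c # C) = m + j" using assms by (simp add: P3_shape_def)
  then have "take (m + j) (c # C @ D) = c # C" "drop (m + j) (c # C @ D) = D"
    by (metis append_Cons append_eq_conv_conj)+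
  then show ?thesis using P3_shape_durfee_j[OF assms] \<open>length (c # C) = m + j\<close>
    by (simp add: P3_to_Q3_def)
qed

lemma Q3_shape_to_P3_shape:
  assumes "Q3_shape m n A j B"
  shows "P3_shape m n (j + length B) A (j + 1) (remove_first_column B)"
proof -
  let ?D = "remove_first_column B"
  have p: "is_partition (A @ j # B)" and s: "sum_list (A @ j # B) = n"
    and j1: "1 \<le> j" and A_gt: "\<forall>a\<in>set A. j < a" and "B \<noteq> []" "last B = 1"
    and hA: "hd A \<le> j + length B" and "A \<noteq> []"
    using assms by (auto simp: Q3_shape_def)
  have sA: "sorted_wrt (\<ge>) A" and sB: "sorted_wrt (\<ge>) B" and B_le: "\<forall>b\<in>set B. b \<le> j"
    and posA: "\<forall>a\<in>set A. 0 < a" and posB: "\<forall>b\<in>set B. 0 < b"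
    using p by (auto simp: is_partition_def sorted_wrt_append)
  have D_le: "\<forall>d\<in>set ?D. d + 2 \<le> j + 1"
    using B_le set_remove_first_column by fastforce
  have "\<forall>a\<in>set A. a \<le> j + length B" using sorted_wrt_ge_hd[OF sA] hA by fastforce
  moreover have "\<forall>a\<in>set A. \<forall>d\<in>set ?D. d \<le> a" using D_le A_gt by fastforce
  moreover have "\<forall>d\<in>set ?D. 0 < d \<and> d \<le> j + length B" using D_le set_remove_first_column by fastforce
  ultimately have "is_partition ((j + length B) # A @ ?D)"
    using sA sorted_remove_first_column[OF sB] posA j1
    by (auto simp: is_partition_def sorted_wrt_append)
  moreover have "sum_list ((j + length B) # A @ ?D) = n"
    using s sum_list_remove_first_column[OF posB] by simp
  moreover have "length ?D < length B"
    using \<open>B \<noteq> []\<close> \<open>last B = 1\<close> last_in_set length_remove_first_column_less by metis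
  moreover have "j + 1 \<le> last ((j + length B) # A)" using \<open>A \<noteq> []\<close> A_gt last_in_set by fastforce
  ultimately show ?thesis using assms D_le by (simp add: P3_shape_def Q3_shape_def)
qed

lemma P3_shape_to_Q3_shape:
  assumes "P3_shape m n c C j D"
  shows "Q3_shape m n C (j - 1) (map Suc D @ replicate (c - j - length D + 1) 1)"
proof -
  let ?B = "map Suc D @ replicate (c - j - length D + 1) 1"
  have p: "is_partition (c # C @ D)" and s: "sum_list (c # C @ D) = n"
    and lC: "Suc (length C) = m + j" and j2: "2 \<le> j" and last_C: "j \<le> last (c # C)"
    and D_le: "\<forall>d\<in>set D. d + 2 \<le> j" and lD: "length D + j \<le> c"
    using assms by (auto simp: P3_shape_def)
  have "C \<noteq> []" using lC j2 by auto
  have scC: "sorted_wrt (\<ge>) (c # C)" and sD: "sorted_wrt (\<ge>) D" and posC: "\<forall>a\<in>set C. 0 < a"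
    using p by (auto simp: is_partition_def sorted_wrt_append)
  have C_ge: "\<forall>a\<in>set C. j \<le> a" using sorted_wrt_ge_last[OF scC] last_C by fastforce
  have B_le: "\<forall>b\<in>set ?B. b \<le> j - 1" using D_le j2 by auto
  have "sorted_wrt (\<ge>) (replicate k (1::nat))" for k by (induction k) auto
  then have "sorted_wrt (\<ge>) ?B"
    using sD by (auto simp: sorted_wrt_append sorted_wrt_map simp del: replicate_Suc)
  then have "sorted_wrt (\<ge>) ((j - 1) # ?B)" using B_le by (simp only: sorted_wrt.simps(2))
  moreover have "\<forall>a\<in>set C. \<forall>y\<in>set ((j - 1) # ?B). y \<le> a"
  proof (intro ballI)
    fix a y assume "a \<in> set C" "y \<in> set ((j - 1) # ?B)"
    then have "j \<le> a" "y \<le> j - 1" using C_ge B_le by auto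
    then show "y \<le> a" by simp
  qed
  ultimately have "sorted_wrt (\<ge>) (C @ (j - 1) # ?B)"
    using scC by (simp only: sorted_wrt_append sorted_wrt.simps(2)) blast
  moreover have "\<forall>y\<in>set (C @ (j - 1) # ?B). 0 < y" using posC j2 by auto
  ultimately have "is_partition (C @ (j - 1) # ?B)" by (simp only: is_partition_def)
  moreover have "sum_list (C @ (j - 1) # ?B) = n"
    using s lD j2 by (simp add: sum_list_Suc sum_list_replicate)
  moreover have "hd C \<le> j - 1 + length ?B" using scC \<open>C \<noteq> []\<close> lD j2 by simp
  ultimately show ?thesis using lC j2 C_ge by (auto simp: Q3_shape_def)
qed

lemma Q3_to_P3_in_P3:
  assumes "xs \<in> Q3 m n"
  shows "Q3_to_P3 m xs \<in> P3 m n"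
proof -
  obtain A j B where "xs = A @ j # B" "Q3_shape m n A j B"
    using Q3_shape_of_Q3[OF assms] .
  then show ?thesis
    using Q3_to_P3_shape P3_shape_in_P3[OF Q3_shape_to_P3_shape] by simp
qed

lemma P3_to_Q3_in_Q3:
  assumes "ys \<in> P3 m n"
  shows "P3_to_Q3 m ys \<in> Q3 m n"
proof -
  obtain c C j D where "ys = c # C @ D" "P3_shape m n c C j D"
    using P3_shape_of_P3[OF assms] .
  then show ?thesis
    using P3_to_Q3_shape Q3_shape_in_Q3[OF P3_shape_to_Q3_shape] by simp
qed

lemma P3_to_Q3_Q3_to_P3:
  assumes "xs \<in> Q3 m n"
  shows "P3_to_Q3 m (Q3_to_P3 m xs) = xs"
proof -
  obtain A j B where xs: "xs = A @ j # B" and shape: "Q3_shape m n A j B"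
    using Q3_shape_of_Q3[OF assms] .
  let ?D = "remove_first_column B"
  have "is_partition B"
    using shape by (auto simp: Q3_shape_def is_partition_def sorted_wrt_append)
  have "P3_shape m n (j + length B) A (j + 1) ?D" by (rule Q3_shape_to_P3_shape[OF shape])
  then have "length ?D + (j + 1) \<le> j + length B" by (simp add: P3_shape_def)
  then have "j + length B - (j + 1) - length ?D + 1 = length B - length ?D" by arith
  then show ?thesis
    using Q3_to_P3_shape[OF shape] P3_to_Q3_shape[OF \<open>P3_shape _ _ _ _ _ _\<close>]
      add_column_remove_first_column[OF \<open>is_partition B\<close>] xs
    by simp
qed

lemma Q3_to_P3_P3_to_Q3:
  assumes "ys \<in> P3 m n"
  shows "Q3_to_P3 m (P3_to_Q3 m ys) = ys"
proof -
  obtain c C j D where ys: "ys = c # C @ D" and shape: "P3_shape m n c C j D"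
    using P3_shape_of_P3[OF assms] .
  have "\<forall>d\<in>set D. 0 < d" "length D + j \<le> c" "2 \<le> j"
    using shape by (auto simp: P3_shape_def is_partition_def)
  then show ?thesis
    using ys P3_to_Q3_shape[OF shape] Q3_to_P3_shape[OF P3_shape_to_Q3_shape[OF shape]] by simp
qed

theorem lemma4p3:
  fixes m n :: nat
  assumes "1 \<le> n"
  shows "\<exists>f. bij_betw f (Q3 m n) (P3 m n)"
proof
  show "bij_betw (Q3_to_P3 m) (Q3 m n) (P3 m n)"
    by (rule bij_betw_byWitness[where f' = "P3_to_Q3 m"])
      (auto simp: P3_to_Q3_Q3_to_P3 Q3_to_P3_P3_to_Q3 Q3_to_P3_in_P3 P3_to_Q3_in_Q3)
qed

end
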